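(* Let $w=(1+\sqrt{-3})/2$. Suppose that every Eisenstein integer $a+bw$ with integers $a>3$, $b>3$ can be written as $p+q$ with $p,q$ Eisenstein primes lying in $Q=\{x+yw : x,y\in\mathbb{Z},\ x>0,\ y>0\}$. Then there are infinitely many positive integers $n$ such that $n^2+n+1$ is a rational prime.
   Context: Here $w=(1+\sqrt{-3})/2$ (a primitive sixth root of unity, $w^3=-1$). Eisenstein integers are the elements $a+bw$ with $a,b\in\mathbb{Z}$, forming the ring $\mathbb{Z}[w]$, with norm $N(a+bw)=|a+bw|^2=a^2+ab+b^2$. An Eisenstein prime is an irreducible (equivalently, prime) element of $\mathbb{Z}[w]$. $Q$ denotes the set of Eisenstein integers $a+bw$ with $a>0$ and $b>0$. *)

theory Defs
  imports Complex_Main "HOL-Computational_Algebra.Primes"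
begin

definition eis_w :: complex where
  "eis_w = Complex (1/2) (sqrt 3 / 2)"

definition eis :: "int \<Rightarrow> int \<Rightarrow> complex" where
  "eis a b = of_int a + of_int b * eis_w"

definition Eis :: "complex set" where
  "Eis = {eis a b | a b. True}"

definition eis_unit :: "complex \<Rightarrow> bool" where
  "eis_unit x \<longleftrightarrow> x \<in> Eis \<and> (\<exists>y\<in>Eis. x * y = 1)"

text \<open>Eisenstein prime = irreducible element of Z[w] (the library notion of
  irreducibility, relativised to the subring Z[w]).\<close>
definition eis_prime :: "complex \<Rightarrow> bool" where
  "eis_prime p \<longleftrightarrow> p \<in> Eis \<and> p \<noteq> 0 \<and> \<not> eis_unit p \<and>
     (\<forall>y\<in>Eis. \<forall>z\<in>Eis. p = y * z \<longrightarrow> eis_unit y \<or> eis_unit z)"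

definition eis_Q :: "complex set" where
  "eis_Q = {eis x y | x y. x > 0 \<and> y > 0}"

end

theory Submission
  imports Defs "HOL-Library.Discrete_Functions"
begin

(* Suppose n^2 + n + 1 is prime only for n \<le> M, and pick an odd A > 2M divisible by
   N(3w - j) = j^2 - 3j + 9 for every 1 \<le> j \<le> M. Write A + 4w = p + q with p, q
   Eisenstein primes in Q; their imaginary parts split 4 as 2 + 2 or 1 + 3.
   In the first case one real part is even, so that summand is 2(k + w), not prime.
   In the second case p = x + w. A proper prime factor of x^2 + x + 1 = N(x + w) would,
   by Thue's lemma, be the norm of a proper factor of x + w; hence x^2 + x + 1 is prime
   and x \<le> M. But then 3w - x divides q = (A - x) + 3w, and the quotient is no unit. *)

definition eis_norm :: "int \<Rightarrow> int \<Rightarrow> int" where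
  "eis_norm a b = a^2 + a*b + b^2"

lemma eis_w_squared: "eis_w^2 = eis_w - 1"
  by (simp add: eis_w_def complex_eq_iff power2_eq_square)

lemma eis_add: "eis a b + eis c d = eis (a + c) (b + d)"
  by (simp add: eis_def algebra_simps)

lemma eis_mult: "eis a b * eis c d = eis (a*c - b*d) (a*d + b*c + b*d)"
proof -
  have "eis a b * eis c d = of_int (a*c) + of_int (a*d + b*c) * eis_w + of_int (b*d) * eis_w^2"
    by (simp add: eis_def algebra_simps power2_eq_square)
  then show ?thesis
    by (simp add: eis_w_squared eis_def algebra_simps)
qed

lemma eis_of_int: "eis a 0 = of_int a"
  by (simp add: eis_def)

lemma of_int_mult_eis: "of_int k * eis a b = eis (k*a) (k*b)"
  by (simp add: eis_def algebra_simps)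

lemma eis_eq_iff: "eis a b = eis c d \<longleftrightarrow> a = c \<and> b = d"
proof
  assume eq: "eis a b = eis c d"
  then have "Im (eis a b) = Im (eis c d)" by simp
  then have "b = d" by (simp add: eis_def eis_w_def)
  with eq show "a = c \<and> b = d"
    by (simp add: eis_def)
qed simp

lemma eis_in_Eis [simp]: "eis a b \<in> Eis"
  by (auto simp: Eis_def)

lemma eis_norm_mult:
  "eis_norm (a*c - b*d) (a*d + b*c + b*d) = eis_norm a b * eis_norm c d"
  by (simp add: eis_norm_def algebra_simps power2_eq_square)

lemma eis_norm_eq_mult:
  assumes "eis x y = eis a b * eis c d"
  shows "eis_norm x y = eis_norm a b * eis_norm c d"
  using assms by (simp add: eis_mult eis_eq_iff eis_norm_mult)

lemma four_eis_norm: "4 * eis_norm a b = (2*a + b)^2 + 3 * b^2"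
  by (simp add: eis_norm_def algebra_simps power2_eq_square)

lemma eis_norm_nonneg: "0 \<le> eis_norm a b"
  using four_eis_norm[of a b] by (smt (verit) zero_le_power2)

lemma eis_norm_pos: "a \<noteq> 0 \<or> b \<noteq> 0 \<Longrightarrow> 0 < eis_norm a b"
  using four_eis_norm[of a b] by (smt (verit) zero_le_power2 power2_less_eq_zero_iff)

lemma even_eis_norm_iff: "even (eis_norm a b) \<longleftrightarrow> even a \<and> even b"
  by (cases "even a"; cases "even b") (auto simp: eis_norm_def power2_eq_square)

lemma eis_unit_imp_norm_1:
  assumes "eis_unit (eis a b)"
  shows "eis_norm a b = 1"
proof -
  obtain c d where "eis a b * eis c d = eis 1 0"
    using assms by (auto simp: eis_unit_def Eis_def eis_of_int)
  then have "eis_norm a b * eis_norm c d = eis_norm 1 0"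
    by (metis eis_norm_eq_mult)
  then have "eis_norm a b * eis_norm c d = 1"
    by (simp add: eis_norm_def)
  then show ?thesis
    using eis_norm_nonneg[of a b] pos_zmult_eq_1_iff_lemma by force
qed

lemma eis_prime_factor_norm_1:
  assumes "eis_prime (eis a b * eis c d)"
  shows "eis_norm a b = 1 \<or> eis_norm c d = 1"
proof -
  have "eis_unit (eis a b) \<or> eis_unit (eis c d)"
    using assms unfolding eis_prime_def by simp
  then show ?thesis
    using eis_unit_imp_norm_1 by blast
qed

lemma eis_mult_conj: "eis a b * eis (a + b) (- b) = of_int (eis_norm a b)"
  by (simp add: eis_mult eis_norm_def flip: eis_of_int) (simp add: algebra_simps power2_eq_square)

lemma eis_dvd_via_conj:
  assumes "eis_norm a b \<noteq> 0" and "eis (a + b) (- b) * z = of_int (eis_norm a b) * u"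
  shows "eis a b * u = z"
proof -
  have "of_int (eis_norm a b) * (eis a b * u) = eis a b * eis (a + b) (- b) * z"
    using assms(2) by (simp add: ac_simps)
  also have "\<dots> = of_int (eis_norm a b) * z"
    by (simp add: eis_mult_conj)
  finally show ?thesis
    using assms(1) by simp
qed

lemma eis_add_norm_multiple:
  "eis (a + eis_norm a b * k) b = eis a b * eis (1 + (a + b) * k) (- b * k)"
  by (simp add: eis_mult eis_eq_iff eis_norm_def algebra_simps power2_eq_square)

lemma thue_lemma:
  fixes q :: nat and x :: int
  assumes not_square: "\<And>s. s^2 \<noteq> q"
  shows "\<exists>a b. (a \<noteq> 0 \<or> b \<noteq> 0) \<and> a^2 < int q \<and> b^2 < int q \<and> int q dvd a - b*x"
proof -
  define s where "s = floor_sqrt q"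
  have "q < (Suc s)^2"
    unfolding s_def by (rule Suc_floor_sqrt_power2_gt)
  have s_less: "int s ^ 2 < int q"
    using floor_sqrt_power2_le[of q] not_square[of s] unfolding s_def
    by (metis le_neq_implies_less of_nat_less_iff of_nat_power)
  have "q > 0"
    using not_square[of 0] by simp
  define g where "g = (\<lambda>(u::nat, v::nat). (int u - int v * x) mod int q)"
  \<comment> \<open>(s+1)^2 pairs but only q residues\<close>
  have "\<not> inj_on g ({0..s} \<times> {0..s})"
  proof
    assume "inj_on g ({0..s} \<times> {0..s})"
    moreover have "g ` ({0..s} \<times> {0..s}) \<subseteq> {0..<int q}"
      using \<open>q > 0\<close> by (auto simp: g_def)
    ultimately have "card ({0..s} \<times> {0..s}) \<le> card {0..<int q}"
      using card_inj_on_le by blast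
    with \<open>q < (Suc s)^2\<close> show False
      by (simp add: power2_eq_square)
  qed
  then obtain u1 v1 u2 v2
    where uv: "(u1, v1) \<noteq> (u2, v2)" "u1 \<le> s" "v1 \<le> s" "u2 \<le> s" "v2 \<le> s"
      and "g (u1, v1) = g (u2, v2)"
    unfolding inj_on_def by auto blast+
  define a where "a = int u1 - int u2"
  define b where "b = int v1 - int v2"
  have "int q dvd a - b*x"
    using \<open>g (u1, v1) = g (u2, v2)\<close>
    by (simp add: g_def a_def b_def mod_eq_dvd_iff algebra_simps)
  moreover have "a \<noteq> 0 \<or> b \<noteq> 0"
    using uv(1) by (auto simp: a_def b_def)
  moreover have "\<bar>a\<bar> \<le> int s" "\<bar>b\<bar> \<le> int s"
    using uv(2-5) by (auto simp: a_def b_def)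
  then have "a^2 < int q" "b^2 < int q"
    using s_less by (metis abs_le_square_iff abs_of_nat order_le_less_trans)+
  ultimately show ?thesis
    by blast
qed

lemma prime_divisor_of_eis_norm_is_norm:
  fixes q :: nat and x :: int
  assumes q: "prime q" and q_dvd: "int q dvd eis_norm x 1"
  shows "\<exists>a b. eis_norm a b = int q \<and> int q dvd a - b*x"
proof -
  have "s^2 \<noteq> q" for s
    using q by (auto simp: prime_power_iff)
  then obtain a b where ab: "a \<noteq> 0 \<or> b \<noteq> 0" "a^2 < int q" "b^2 < int q"
    and q_dvd_ab: "int q dvd a - b*x"
    using thue_lemma by blast
  have "eis_norm a b = (a - b*x) * (a + b*x + b) + b^2 * eis_norm x 1"
    by (simp add: eis_norm_def algebra_simps power2_eq_square)
  then have "int q dvd eis_norm a b"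
    using q_dvd q_dvd_ab by simp
  then obtain k where k: "eis_norm a b = int q * k"
    by blast
  have "0 < eis_norm a b"
    using ab(1) by (rule eis_norm_pos)
  moreover have "2 * eis_norm a b = 3 * a^2 + 3 * b^2 - (a - b)^2"
    by (simp add: eis_norm_def algebra_simps power2_eq_square)
  then have "eis_norm a b < 3 * int q"
    using ab(2,3) zero_le_power2[of "a - b"] by linarith
  moreover have "0 < int q"
    using q by (simp add: prime_gt_0_nat)
  ultimately have "0 < k" "k < 3"
    using k by (simp_all add: zero_less_mult_iff mult.commute[of _ 3])
  then have "k = 1 \<or> k = 2"
    by linarith
  moreover have "k \<noteq> 2"
  proof
    assume "k = 2"
    then have "even a \<and> even b"
      using k by (simp flip: even_eis_norm_iff)
    then obtain a' b' where "a = 2*a'" "b = 2*b'"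
      by blast
    then have "eis_norm a b = 4 * eis_norm a' b'"
      by (simp add: eis_norm_def algebra_simps power2_eq_square)
    with k \<open>k = 2\<close> have "int q = 2 * eis_norm a' b'"
      by simp
    then have "2 dvd q"
      by presburger
    then have "q = 2"
      using primes_dvd_imp_eq[OF two_is_prime_nat q] by simp
    then show False
      using q_dvd even_eis_norm_iff[of x 1] by simp
  qed
  ultimately show ?thesis
    using k q_dvd_ab by auto
qed

lemma eis_prime_imp_prime_norm:
  fixes x :: nat
  assumes "0 < x" and x_prime: "eis_prime (eis (int x) 1)"
  shows "prime (x^2 + x + 1)"
proof (rule ccontr)
  assume not_prime: "\<not> prime (x^2 + x + 1)"
  have norm_x: "eis_norm (int x) 1 = int (x^2 + x + 1)"
    by (simp add: eis_norm_def)
  obtain q where q: "prime q" "q dvd x^2 + x + 1"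
    using \<open>0 < x\<close> prime_factor_nat[of "x^2 + x + 1"] by auto
  with not_prime have q_proper: "q \<noteq> x^2 + x + 1"
    by auto
  have q_dvd_x: "int q dvd eis_norm (int x) 1"
    using q(2) unfolding norm_x by (simp only: of_nat_dvd_iff)
  then obtain a b where ab: "eis_norm a b = int q" "int q dvd a - b * int x"
    using prime_divisor_of_eis_norm_is_norm q(1) by blast
  have "(a + b) * int x + b = (a - b * int x) * int x + b * eis_norm (int x) 1"
    by (simp add: eis_norm_def algebra_simps power2_eq_square)
  then have "int q dvd (a + b) * int x + b"
    using ab(2) q_dvd_x by simp
  then obtain c d where cd: "(a + b) * int x + b = int q * c" "a - b * int x = int q * d"
    using ab(2) by (metis dvdE)
  have "eis (a + b) (- b) * eis (int x) 1 = eis ((a + b) * int x + b) (a - b * int x)"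
    by (simp add: eis_mult eis_eq_iff algebra_simps)
  also have "\<dots> = of_int (eis_norm a b) * eis c d"
    unfolding cd ab(1) of_int_mult_eis ..
  finally have "eis (a + b) (- b) * eis (int x) 1 = of_int (eis_norm a b) * eis c d" .
  moreover have "eis_norm a b \<noteq> 0"
    using ab(1) q(1) by (simp add: prime_gt_0_nat)
  ultimately have factor: "eis a b * eis c d = eis (int x) 1"
    by (rule eis_dvd_via_conj[rotated])
  then have "eis_norm (int x) 1 = eis_norm a b * eis_norm c d"
    by (rule eis_norm_eq_mult[OF sym])
  then have "int q * eis_norm c d = int (x^2 + x + 1)"
    by (simp only: ab(1) norm_x)
  then have "eis_norm c d \<noteq> 1"
    using q_proper by (metis mult.right_neutral of_nat_eq_iff)
  moreover have "eis_norm a b \<noteq> 1"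
    using ab(1) q(1) by auto
  moreover have "eis_prime (eis a b * eis c d)"
    using x_prime factor by simp
  ultimately show False
    using eis_prime_factor_norm_1 by blast
qed

lemma not_eis_prime_add_norm_multiple:
  assumes "eis_norm a b \<noteq> 1" and "eis_norm (a + eis_norm a b * k) b \<noteq> eis_norm a b"
  shows "\<not> eis_prime (eis (a + eis_norm a b * k) b)"
proof
  let ?e = "1 + (a + b) * k" and ?f = "- b * k"
  assume "eis_prime (eis (a + eis_norm a b * k) b)"
  then have "eis_norm ?e ?f = 1"
    using assms(1) eis_prime_factor_norm_1 by (metis eis_add_norm_multiple)
  then show False
    using assms(2) eis_norm_eq_mult[OF eis_add_norm_multiple] by simp
qed

lemma not_eis_prime_double:
  assumes "0 < k"
  shows "\<not> eis_prime (eis (2 * k) 2)"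
proof
  assume "eis_prime (eis (2 * k) 2)"
  moreover have "eis (2 * k) 2 = eis 2 0 * eis k 1"
    by (simp add: eis_mult)
  moreover have "eis_norm k 1 \<noteq> 1" "eis_norm 2 0 \<noteq> 1"
    using assms by (simp_all add: eis_norm_def power2_eq_square) (smt (verit) mult_pos_pos)
  ultimately show False
    using eis_prime_factor_norm_1 by metis
qed

lemma not_eis_prime_pair_2_2:
  fixes x y :: int
  assumes "odd (x + y)" and "0 < x" and "0 < y"
  shows "\<not> (eis_prime (eis x 2) \<and> eis_prime (eis y 2))"
proof -
  have "even x \<or> even y"
    using assms(1) by auto
  then consider k where "x = 2 * k" | k where "y = 2 * k"
    by blast
  then show ?thesis
    using assms(2,3) not_eis_prime_double by cases auto
qed

lemma not_eis_prime_pair_1_3: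
  fixes M :: nat and A x :: int
  assumes bound: "\<forall>n::nat. 0 < n \<and> prime (n^2 + n + 1) \<longrightarrow> n \<le> M"
    and dvd: "\<forall>j\<in>{1..M}. eis_norm (- int j) 3 dvd A"
    and "2 * int M \<le> A" and "0 < x"
  shows "\<not> (eis_prime (eis x 1) \<and> eis_prime (eis (A - x) 3))"
proof
  assume primes: "eis_prime (eis x 1) \<and> eis_prime (eis (A - x) 3)"
  obtain n where n: "x = int n" "0 < n"
    using \<open>0 < x\<close> zero_less_imp_eq_int by blast
  then have "n \<le> M"
    using bound eis_prime_imp_prime_norm primes by blast
  then obtain k where k: "A = eis_norm (- int n) 3 * k"
    using dvd n(2) by fastforce
  have "4 * eis_norm (- int n) 3 = (2 * int n - 3)^2 + 27"
    by (simp add: eis_norm_def algebra_simps power2_eq_square)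
  then have "eis_norm (- int n) 3 \<noteq> 1"
    by (smt (verit) zero_le_power2)
  moreover have "eis_norm (A - int n) 3 \<noteq> eis_norm (- int n) 3"
  proof -
    have "int n \<le> A - int n"
      using \<open>n \<le> M\<close> \<open>2 * int M \<le> A\<close> by linarith
    then have "(int n)^2 \<le> (A - int n)^2"
      by (simp add: power_mono)
    then show ?thesis
      using \<open>0 < x\<close> n(1) \<open>int n \<le> A - int n\<close>
      unfolding eis_norm_def power2_minus by (smt (verit))
  qed
  ultimately have "\<not> eis_prime (eis (A - int n) 3)"
    using not_eis_prime_add_norm_multiple[of "- int n" 3 k] k by (simp add: algebra_simps)
  with primes n(1) show False
    by simp
qed

lemma not_sum_of_eis_primes_in_Q:
  fixes M :: nat and A :: int
  assumes bound: "\<forall>n::nat. 0 < n \<and> prime (n^2 + n + 1) \<longrightarrow> n \<le> M"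
    and dvd: "\<forall>j\<in>{1..M}. eis_norm (- int j) 3 dvd A"
    and "2 * int M \<le> A" and "odd A"
  shows "\<not> (\<exists>p q. eis_prime p \<and> eis_prime q \<and> p \<in> eis_Q \<and> q \<in> eis_Q \<and> eis A 4 = p + q)"
proof
  assume "\<exists>p q. eis_prime p \<and> eis_prime q \<and> p \<in> eis_Q \<and> q \<in> eis_Q \<and> eis A 4 = p + q"
  then obtain x1 y1 x2 y2 where primes: "eis_prime (eis x1 y1)" "eis_prime (eis x2 y2)"
    and pos: "0 < x1" "0 < y1" "0 < x2" "0 < y2" and "eis A 4 = eis x1 y1 + eis x2 y2"
    unfolding eis_Q_def by blast
  then have sums: "A = x1 + x2" "4 = y1 + y2"
    by (simp_all add: eis_add eis_eq_iff)
  then consider "y1 = 1" "y2 = 3" | "y1 = 2" "y2 = 2" | "y1 = 3" "y2 = 1"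
    using pos by linarith
  then show False
  proof cases
    case 1
    then have "eis_prime (eis x1 1) \<and> eis_prime (eis (A - x1) 3)"
      using primes sums(1) by (simp add: algebra_simps)
    then show False
      using not_eis_prime_pair_1_3[OF bound dvd \<open>2 * int M \<le> A\<close> pos(1)] by blast
  next
    case 2
    then show False
      using not_eis_prime_pair_2_2[of x1 x2] \<open>odd A\<close> primes pos sums(1) by blast
  next
    case 3
    then have "eis_prime (eis x2 1) \<and> eis_prime (eis (A - x2) 3)"
      using primes sums(1) by (simp add: algebra_simps)
    then show False
      using not_eis_prime_pair_1_3[OF bound dvd \<open>2 * int M \<le> A\<close> pos(3)] by blast
  qed
qed

theorem mainTheorem2:
  assumes "\<forall>a b :: int. a > 3 \<and> b > 3 \<longrightarrow>
             (\<exists>p q. eis_prime p \<and> eis_prime q \<and> p \<in> eis_Q \<and> q \<in> eis_Q \<and> eis a b = p + q)"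
  shows "infinite {n :: nat. n > 0 \<and> prime (n^2 + n + 1)}"
proof
  assume "finite {n :: nat. n > 0 \<and> prime (n^2 + n + 1)}"
  then obtain M where bound: "\<forall>n::nat. 0 < n \<and> prime (n^2 + n + 1) \<longrightarrow> n \<le> M"
    unfolding finite_nat_set_iff_bounded_le by blast
  define P where "P = (\<Prod>j\<in>{1..M}. eis_norm (- int j) 3)"
  define A where "A = P * (2 * int M + 5)"
  have "0 < P" "odd P"
    unfolding P_def by (auto simp: eis_norm_pos even_eis_norm_iff even_prod_iff intro!: prod_pos)
  then have A_large: "2 * int M + 5 \<le> A" and "odd A"
    unfolding A_def by simp_all
  have dvd: "\<forall>j\<in>{1..M}. eis_norm (- int j) 3 dvd A"
    unfolding A_def P_def by (auto intro: dvd_mult2 dvd_prodI)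
  have "2 * int M \<le> A" "3 < A"
    using A_large by linarith+
  moreover have "\<exists>p q. eis_prime p \<and> eis_prime q \<and> p \<in> eis_Q \<and> q \<in> eis_Q \<and> eis A 4 = p + q"
    using assms \<open>3 < A\<close> by simp
  ultimately show False
    using not_sum_of_eis_primes_in_Q[OF bound dvd] \<open>odd A\<close> by blast
qed

end
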